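(* Let $n\ge 4$ and let $G$ be a graph on vertex set $[n]$ with $e(G)>\binom{n-1}{2}+1$ or $\rho(G)>n-2$. For $2\le j\le\lceil n/2\rceil$ let $e_j=\{j,n+2-j\}$, and for $1\le k\le\lfloor n/2\rfloor$ let $e'_k=\{k,n+1-k\}$. Then (i) $\{e_3,\ldots,e_{\lceil n/2\rceil}\}\subseteq E(\mathcal{K}(G))$, and (ii) $\{e'_1,\ldots,e'_{\lfloor n/2\rfloor}\}\subseteq E(\mathcal{K}(G))$.
   Context: $e(G)$ is the number of edges and $\rho(G)$ the adjacency spectral radius of $G$. Kelmans transformation: for vertices $x,y$, $\mathcal{K}_{xy}(G)$ is obtained from $G$ by deleting all edges between $y$ and $N_G(y)\setminus(N_G(x)\cup\{x\})$ and adding all edges between $x$ and $N_G(y)\setminus(N_G(x)\cup\{x\})$. For $G$ on $[n]$, $\mathcal{K}(G)$ denotes the graph obtained by repeatedly applying $\mathcal{K}_{xy}$ for pairs $x<y$ until the graph is invariant under all $\mathcal{K}_{xy}$ with $x<y$ (the result is independent of the order of transformations). *)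

theory Defs
  imports Main "Jordan_Normal_Form.Spectral_Radius"
begin

definition is_graph_on :: "nat \<Rightarrow> nat set set \<Rightarrow> bool" where
  "is_graph_on n E \<longleftrightarrow> (\<forall>e\<in>E. e \<subseteq> {1..n} \<and> card e = 2)"

definition nbhd :: "nat set set \<Rightarrow> nat \<Rightarrow> nat set" where
  "nbhd E v = {u. {u, v} \<in> E}"

definition kelmans :: "nat \<Rightarrow> nat \<Rightarrow> nat set set \<Rightarrow> nat set set" where
  "kelmans x y E =
     (let D = nbhd E y - (nbhd E x \<union> {x})
      in (E - {{y, z} | z. z \<in> D}) \<union> {{x, z} | z. z \<in> D})"

definition kelmans_step :: "nat \<Rightarrow> nat set set \<Rightarrow> nat set set \<Rightarrow> bool" where
  "kelmans_step n E E' \<longleftrightarrow> (\<exists>x y. 1 \<le> x \<and> x < y \<and> y \<le> n \<and> E' = kelmans x y E)"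

definition kelmans_stable :: "nat \<Rightarrow> nat set set \<Rightarrow> bool" where
  "kelmans_stable n E \<longleftrightarrow> (\<forall>x y. 1 \<le> x \<and> x < y \<and> y \<le> n \<longrightarrow> kelmans x y E = E)"

text \<open>Adjacency matrix (index i corresponds to vertex i+1), over the complex numbers
  so that the library spectral radius applies.\<close>
definition adj_mat :: "nat \<Rightarrow> nat set set \<Rightarrow> complex mat" where
  "adj_mat n E = mat n n (\<lambda>(i, j). if {i + 1, j + 1} \<in> E then 1 else 0)"

definition rho :: "nat \<Rightarrow> nat set set \<Rightarrow> real" where
  "rho n E = spectral_radius (adj_mat n E)"

end

theory Submission
  imports Defs "HOL-Combinatorics.Transposition"
begin

text \<open>Both hypotheses survive shifting. A Kelmans step keeps the number of edges, and for every
  non-negative vector u it does not decrease the quadratic form \<open>u\<^sup>T A u\<close> once the entries of u at x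
  and y are swapped so that \<open>u x \<ge> u y\<close>. The entrywise modulus of an eigenvector for an eigenvalue
  of modulus \<open>\<rho>(G)\<close> is a non-negative u with \<open>u\<^sup>T A u \<ge> \<rho>(G) |u|\<^sup>2\<close>. So the stable graph H also
  has more than \<open>C(n-1,2) + 1\<close> edges, or a non-negative u with \<open>u\<^sup>T A u > (n - 2) |u|\<^sup>2\<close>.
  On the other hand, if a stable H misses the edge {a, b} with a < b, then it has no edge {a', b'}
  with \<open>a' \<ge> a\<close> and \<open>b' \<ge> b\<close>. This confines the neighbourhoods of the vertices in [1, a), [a, b)
  and [b, n], which gives \<open>2 e(H) \<le> (a-1)(n-1) + (b-a)(b-2) + (n+1-b)(a-1)\<close>, and, for a positive
  weight vector w constant on each of the three ranges with \<open>A w \<le> (n - 2) w\<close>, also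
  \<open>u\<^sup>T A u \<le> (n - 2) |u|\<^sup>2\<close>. For the pairs \<open>e\<^sub>j\<close> and \<open>e'\<^sub>k\<close> both bounds contradict the hypotheses.\<close>

lemma is_graph_on_finite: "is_graph_on n E \<Longrightarrow> finite E"
  unfolding is_graph_on_def by (rule finite_subset[of _ "Pow {1..n}"]) auto

lemma is_graph_on_edgeE:
  assumes "is_graph_on n E" "e \<in> E"
  obtains a b where "e = {a, b}" "a \<noteq> b" "a \<in> {1..n}" "b \<in> {1..n}"
proof -
  have e: "card e = 2" "e \<subseteq> {1..n}" using assms unfolding is_graph_on_def by auto
  then obtain a b where "e = {a, b}" "a \<noteq> b" unfolding card_2_iff by blast
  with e(2) that show ?thesis by auto
qed

lemma is_graph_on_edgeD:
  assumes "is_graph_on n E" "{a, b} \<in> E"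
  shows "a \<noteq> b" "a \<in> {1..n}" "b \<in> {1..n}"
proof -
  have "card {a, b} = 2" "{a, b} \<subseteq> {1..n}" using assms unfolding is_graph_on_def by auto
  then show "a \<noteq> b" "a \<in> {1..n}" "b \<in> {1..n}" by (cases "a = b", simp_all)
qed

lemma is_graph_on_no_loop: "is_graph_on n E \<Longrightarrow> {a} \<notin> E"
  using is_graph_on_edgeD(1)[of n E a a] by auto

lemma nbhd_subset:
  assumes "is_graph_on n E"
  shows "nbhd E i \<subseteq> {1..n} - {i}"
proof
  fix k assume "k \<in> nbhd E i"
  then have "{k, i} \<in> E" by (simp add: nbhd_def)
  from is_graph_on_edgeD[OF assms this] show "k \<in> {1..n} - {i}" by simp
qed

lemma sum_nbhd:
  assumes "is_graph_on n E"
  shows "(\<Sum>k\<in>{1..n}. if {i, k} \<in> E then f k else 0) = sum f (nbhd E i)"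
proof -
  have "nbhd E i = {k \<in> {1..n}. {i, k} \<in> E}"
    using nbhd_subset[OF assms, of i] unfolding nbhd_def by (auto simp: insert_commute)
  then show ?thesis using sum.inter_filter[of "{1..n}" f "\<lambda>k. {i, k} \<in> E"] by simp
qed

lemma sum_transpose: "x \<in> A \<Longrightarrow> y \<in> A \<Longrightarrow> (\<Sum>i\<in>A. g (Transposition.transpose x y i)) = sum g A"
  using sum.reindex_bij_betw[of "Transposition.transpose x y" A A g] by simp

section \<open>The quadratic form of the adjacency matrix\<close>

definition adj_form :: "nat \<Rightarrow> nat set set \<Rightarrow> (nat \<Rightarrow> real) \<Rightarrow> real" where
  "adj_form n E u = (\<Sum>i\<in>{1..n}. \<Sum>j\<in>{1..n}. if {i, j} \<in> E then u i * u j else 0)"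

definition sum_sq :: "nat \<Rightarrow> (nat \<Rightarrow> real) \<Rightarrow> real" where
  "sum_sq n u = (\<Sum>i\<in>{1..n}. (u i)\<^sup>2)"

definition edge_prod_sum :: "nat set set \<Rightarrow> (nat \<Rightarrow> real) \<Rightarrow> real" where
  "edge_prod_sum E u = (\<Sum>e\<in>E. prod u e)"

lemma adj_form_eq_edge_prod_sum:
  assumes G: "is_graph_on n E"
  shows "adj_form n E u = 2 * edge_prod_sum E u"
proof -
  let ?S = "{p \<in> {1..n} \<times> {1..n}. {fst p, snd p} \<in> E}"
  let ?h = "\<lambda>p. u (fst p) * u (snd p)"
  have "adj_form n E u = sum ?h ?S"
    unfolding adj_form_def sum.cartesian_product by (simp add: case_prod_beta sum.inter_filter)
  also have "\<dots> = (\<Sum>e\<in>E. sum ?h {p \<in> ?S. {fst p, snd p} = e})"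
    by (rule sum.group[symmetric]) (use is_graph_on_finite[OF G] in auto)
  also have "\<dots> = (\<Sum>e\<in>E. 2 * prod u e)"
  proof (rule sum.cong[OF refl])
    fix e assume e: "e \<in> E"
    then obtain a b where ab: "e = {a, b}" "a \<noteq> b" "a \<in> {1..n}" "b \<in> {1..n}"
      using is_graph_on_edgeE[OF G] by blast
    have "{p \<in> ?S. {fst p, snd p} = e} = {(a, b), (b, a)}"
      using e ab by (auto simp: doubleton_eq_iff insert_commute)
    then show "sum ?h {p \<in> ?S. {fst p, snd p} = e} = 2 * prod u e"
      using ab by simp
  qed
  finally show ?thesis unfolding edge_prod_sum_def by (simp add: sum_distrib_left)
qed

lemma adj_form_transpose:
  assumes x: "x \<in> {1..n}" and y: "y \<in> {1..n}"
    and swap: "\<And>a b. {a, b} \<in> F \<longleftrightarrow> {Transposition.transpose x y a, Transposition.transpose x y b} \<in> E"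
  shows "adj_form n E (u \<circ> Transposition.transpose x y) = adj_form n F u"
proof -
  let ?\<tau> = "Transposition.transpose x y"
  define h where "h a b = (if {a, b} \<in> E then u (?\<tau> a) * u (?\<tau> b) else 0)" for a b
  have "adj_form n E (u \<circ> ?\<tau>) = (\<Sum>i\<in>{1..n}. \<Sum>j\<in>{1..n}. h i j)"
    unfolding adj_form_def h_def comp_apply ..
  also have "\<dots> = (\<Sum>i\<in>{1..n}. \<Sum>j\<in>{1..n}. h i (?\<tau> j))"
    by (intro sum.cong refl sum_transpose[OF x y, symmetric])
  also have "\<dots> = (\<Sum>i\<in>{1..n}. \<Sum>j\<in>{1..n}. h (?\<tau> i) (?\<tau> j))"
    by (rule sum_transpose[OF x y, symmetric])
  also have "\<dots> = adj_form n F u"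
    unfolding adj_form_def h_def swap transpose_involutory ..
  finally show ?thesis .
qed

section \<open>A single Kelmans transformation\<close>

definition kelmans_moved :: "nat \<Rightarrow> nat \<Rightarrow> nat set set \<Rightarrow> nat set" where
  "kelmans_moved x y E = nbhd E y - (nbhd E x \<union> {x})"

lemma kelmans_eq_image:
  "kelmans x y E =
     (E - (\<lambda>z. {y, z}) ` kelmans_moved x y E) \<union> (\<lambda>z. {x, z}) ` kelmans_moved x y E"
  unfolding kelmans_def kelmans_moved_def Let_def setcompr_eq_image Collect_mem_eq ..

lemma mem_kelmans_moved_iff: "z \<in> kelmans_moved x y E \<longleftrightarrow> {z, y} \<in> E \<and> {z, x} \<notin> E \<and> z \<noteq> x"
  unfolding kelmans_moved_def nbhd_def by auto

lemma doubleton_in_image_iff: "{a, b} \<in> (\<lambda>z. {c, z}) ` D \<longleftrightarrow> (a = c \<and> b \<in> D) \<or> (b = c \<and> a \<in> D)"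
  by (auto simp: doubleton_eq_iff insert_commute image_iff)

lemma doubleton_in_kelmans_iff:
  "{a, b} \<in> kelmans x y E \<longleftrightarrow>
     ({a, b} \<in> E \<and> \<not> ((a = y \<and> b \<in> kelmans_moved x y E) \<or> (b = y \<and> a \<in> kelmans_moved x y E)))
     \<or> (a = x \<and> b \<in> kelmans_moved x y E) \<or> (b = x \<and> a \<in> kelmans_moved x y E)"
  unfolding kelmans_eq_image Un_iff Diff_iff doubleton_in_image_iff by blast

lemma kelmans_moved_props:
  assumes G: "is_graph_on n E"
  shows "(\<lambda>z. {y, z}) ` kelmans_moved x y E \<subseteq> E"
    "(\<lambda>z. {x, z}) ` kelmans_moved x y E \<inter> E = {}"
    "x \<notin> kelmans_moved x y E" "y \<notin> kelmans_moved x y E" "kelmans_moved x y E \<subseteq> {1..n}"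
  using is_graph_on_no_loop[OF G, of y] is_graph_on_edgeD[OF G]
  by (auto simp: mem_kelmans_moved_iff insert_commute)

lemma is_graph_on_kelmans:
  assumes G: "is_graph_on n E" and x: "x \<in> {1..n}"
  shows "is_graph_on n (kelmans x y E)"
  unfolding is_graph_on_def kelmans_eq_image
proof
  fix e assume "e \<in> E - (\<lambda>z. {y, z}) ` kelmans_moved x y E \<union> (\<lambda>z. {x, z}) ` kelmans_moved x y E"
  then consider "e \<in> E" | z where "z \<in> kelmans_moved x y E" "e = {x, z}" by blast
  then show "e \<subseteq> {1..n} \<and> card e = 2"
  proof cases
    case 1 then show ?thesis using G unfolding is_graph_on_def by blast
  next
    case 2
    then have "z \<noteq> x" "z \<in> {1..n}" using kelmans_moved_props[OF G, where x = x and y = y] by auto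
    then show ?thesis using 2 x by auto
  qed
qed

lemma card_kelmans:
  assumes G: "is_graph_on n E"
  shows "card (kelmans x y E) = card E"
proof -
  let ?M = "kelmans_moved x y E"
  note M = kelmans_moved_props[OF G, where x = x and y = y]
  have fin: "finite E" "finite ?M" using is_graph_on_finite[OF G] finite_subset[OF M(5)] by auto
  have inj: "inj_on (\<lambda>z. {c, z}) ?M" for c :: nat by (auto simp: inj_on_def doubleton_eq_iff)
  have "card (kelmans x y E) = card (E - (\<lambda>z. {y, z}) ` ?M) + card ((\<lambda>z. {x, z}) ` ?M)"
    unfolding kelmans_eq_image by (rule card_Un_disjoint) (use fin M in auto)
  also have "\<dots> = card E"
    using fin M(1) card_mono[OF fin(1) M(1)] by (simp add: card_Diff_subset card_image[OF inj])
  finally show ?thesis .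
qed

lemma edge_prod_sum_kelmans:
  assumes G: "is_graph_on n E"
  shows "edge_prod_sum (kelmans x y E) u =
    edge_prod_sum E u + (\<Sum>z\<in>kelmans_moved x y E. (u x - u y) * u z)"
proof -
  let ?M = "kelmans_moved x y E"
  note M = kelmans_moved_props[OF G, where x = x and y = y]
  have fin: "finite E" "finite ?M" using is_graph_on_finite[OF G] finite_subset[OF M(5)] by auto
  have moved: "edge_prod_sum ((\<lambda>z. {c, z}) ` ?M) u = (\<Sum>z\<in>?M. u c * u z)"
    if "c \<notin> ?M" for c
  proof -
    have "inj_on (\<lambda>z. {c, z}) ?M" by (auto simp: inj_on_def doubleton_eq_iff)
    moreover have "prod u {c, z} = u c * u z" if "z \<in> ?M" for z
      using that \<open>c \<notin> ?M\<close> by (cases "c = z") auto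
    ultimately show ?thesis unfolding edge_prod_sum_def by (simp add: sum.reindex)
  qed
  have "edge_prod_sum (kelmans x y E) u =
      edge_prod_sum (E - (\<lambda>z. {y, z}) ` ?M) u + edge_prod_sum ((\<lambda>z. {x, z}) ` ?M) u"
    unfolding kelmans_eq_image edge_prod_sum_def by (rule sum.union_disjoint) (use fin M in auto)
  also have "edge_prod_sum (E - (\<lambda>z. {y, z}) ` ?M) u =
      edge_prod_sum E u - edge_prod_sum ((\<lambda>z. {y, z}) ` ?M) u"
    unfolding edge_prod_sum_def by (rule sum_diff) (use fin M in auto)
  finally show ?thesis using moved M(3,4) by (simp add: sum_subtractf left_diff_distrib)
qed

lemma doubleton_in_kelmans_transpose_iff:
  assumes G: "is_graph_on n E" and "x \<noteq> y"
  shows "{a, b} \<in> kelmans y x E \<longleftrightarrow>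
    {Transposition.transpose x y a, Transposition.transpose x y b} \<in> kelmans x y E"
  using assms is_graph_on_no_loop[OF G]
  unfolding doubleton_in_kelmans_iff mem_kelmans_moved_iff
  by (cases "a = x"; cases "a = y"; cases "b = x"; cases "b = y") (simp_all add: insert_commute, blast+)

text \<open>If \<open>u x < u y\<close>, it is \<open>K\<^sub>y\<^sub>x\<close> that does not decrease the form; since \<open>K\<^sub>x\<^sub>y E\<close> is \<open>K\<^sub>y\<^sub>x E\<close>
  with x and y relabelled, the witness is then u with the entries at x and y swapped.\<close>
lemma kelmans_adj_form_increase:
  assumes G: "is_graph_on n E" and x: "x \<in> {1..n}" and y: "y \<in> {1..n}" and "x \<noteq> y"
    and u: "\<forall>i. u i \<ge> 0"
  shows "\<exists>u'. (\<forall>i. u' i \<ge> 0) \<and> sum_sq n u' = sum_sq n u \<and>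
    adj_form n E u \<le> adj_form n (kelmans x y E) u'"
proof -
  have increase: "adj_form n E u \<le> adj_form n (kelmans a b E) u"
    if "a \<in> {1..n}" "u b \<le> u a" for a b
  proof -
    have "0 \<le> (\<Sum>z\<in>kelmans_moved a b E. (u a - u b) * u z)"
      using u that by (intro sum_nonneg mult_nonneg_nonneg) auto
    then show ?thesis
      using edge_prod_sum_kelmans[OF G] adj_form_eq_edge_prod_sum[OF G]
        adj_form_eq_edge_prod_sum[OF is_graph_on_kelmans[OF G that(1)]] by simp
  qed
  show ?thesis
  proof (cases "u y \<le> u x")
    case True
    then show ?thesis using increase[OF x] u by blast
  next
    case False
    let ?u = "u \<circ> Transposition.transpose x y"
    have "adj_form n E u \<le> adj_form n (kelmans y x E) u" using increase[OF y] False by simp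
    also have "\<dots> = adj_form n (kelmans x y E) ?u"
      using adj_form_transpose[OF x y] doubleton_in_kelmans_transpose_iff[OF G \<open>x \<noteq> y\<close>] by metis
    finally have "adj_form n E u \<le> adj_form n (kelmans x y E) ?u" .
    moreover have "sum_sq n ?u = sum_sq n u"
      unfolding sum_sq_def using sum_transpose[OF x y] by simp
    ultimately show ?thesis using u by (intro exI[of _ ?u]) simp
  qed
qed

lemma kelmans_steps_graph:
  assumes "(kelmans_step n)\<^sup>*\<^sup>* E F" "is_graph_on n E"
  shows "is_graph_on n F"
  using assms by induction (auto simp: kelmans_step_def intro: is_graph_on_kelmans)

lemma kelmans_steps_card:
  assumes "(kelmans_step n)\<^sup>*\<^sup>* E F" "is_graph_on n E"
  shows "card F = card E"
  using assms(1)
proof induction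
  case (step F F')
  then show ?case
    using card_kelmans[OF kelmans_steps_graph[OF step.hyps(1) assms(2)]]
    by (auto simp: kelmans_step_def)
qed simp

lemma kelmans_steps_adj_form:
  assumes "(kelmans_step n)\<^sup>*\<^sup>* E F" "is_graph_on n E" "\<forall>i. u i \<ge> 0"
  shows "\<exists>u'. (\<forall>i. u' i \<ge> 0) \<and> sum_sq n u' = sum_sq n u \<and> adj_form n E u \<le> adj_form n F u'"
  using assms(1)
proof induction
  case base
  then show ?case using assms(3) by blast
next
  case (step F F')
  then obtain x y where xy: "1 \<le> x" "x < y" "y \<le> n" and F': "F' = kelmans x y F"
    unfolding kelmans_step_def by blast
  obtain u1 where u1: "\<forall>i. u1 i \<ge> 0" "sum_sq n u1 = sum_sq n u" "adj_form n E u \<le> adj_form n F u1"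
    using step.IH by blast
  obtain u2 where "\<forall>i. u2 i \<ge> 0" "sum_sq n u2 = sum_sq n u1" "adj_form n F u1 \<le> adj_form n F' u2"
    using kelmans_adj_form_increase[OF kelmans_steps_graph[OF step.hyps(1) assms(2)] _ _ _ u1(1),
        of x y] xy unfolding F' by auto
  with u1 show ?case by (intro exI[of _ u2]) auto
qed

section \<open>Kelmans-stable graphs\<close>

lemma kelmans_stable_shift:
  assumes st: "kelmans_stable n H" and xy: "1 \<le> x" "x < y" "y \<le> n"
    and e: "{y, z} \<in> H" and "z \<noteq> x"
  shows "{x, z} \<in> H"
proof (rule ccontr)
  assume "{x, z} \<notin> H"
  then have "z \<in> kelmans_moved x y H"
    using e \<open>z \<noteq> x\<close> by (simp add: mem_kelmans_moved_iff insert_commute)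
  then have "{y, z} \<notin> kelmans x y H" using xy \<open>z \<noteq> x\<close> by (auto simp: doubleton_in_kelmans_iff)
  moreover have "kelmans x y H = H" using st xy unfolding kelmans_stable_def by blast
  ultimately show False using e by simp
qed

lemma kelmans_stable_no_edge_above:
  assumes st: "kelmans_stable n H" and G: "is_graph_on n H"
    and m: "{a, b} \<notin> H" and ab: "1 \<le> a" "a < b"
    and a': "a \<le> a'" and b': "b \<le> b'"
  shows "{a', b'} \<notin> H"
proof
  assume e: "{a', b'} \<in> H"
  have n: "a' \<le> n" "b' \<le> n" using is_graph_on_edgeD[OF G e] by auto
  have "{a, b'} \<in> H"
  proof (cases "a = a'")
    case False
    then show ?thesis using kelmans_stable_shift[OF st ab(1) _ n(1) e] a' b' ab(2) by simp
  qed (use e in simp)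
  then have "{b', a} \<in> H" by (simp add: insert_commute)
  have "{b, a} \<in> H"
  proof (cases "b = b'")
    case False
    then show ?thesis
      using kelmans_stable_shift[OF st _ _ n(2) \<open>{b', a} \<in> H\<close>] ab b' by simp
  qed (use \<open>{b', a} \<in> H\<close> in simp)
  with m show False by (simp add: insert_commute)
qed

lemma kelmans_stable_nbhd_mid:
  assumes "kelmans_stable n H" "is_graph_on n H" "{a, b} \<notin> H" "1 \<le> a" "a < b" "a \<le> i"
  shows "nbhd H i \<subseteq> {1..<b} - {i}"
  using nbhd_subset[OF assms(2), of i] kelmans_stable_no_edge_above[OF assms(1-5), of i]
    assms(6) unfolding nbhd_def by (force simp: insert_commute)

lemma kelmans_stable_nbhd_high:
  assumes "kelmans_stable n H" "is_graph_on n H" "{a, b} \<notin> H" "1 \<le> a" "a < b" "b \<le> i"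
  shows "nbhd H i \<subseteq> {1..<a}"
  using nbhd_subset[OF assms(2), of i] kelmans_stable_no_edge_above[OF assms(1-5), of _ i]
    assms(6) unfolding nbhd_def by force

definition piecewise3 :: "nat \<Rightarrow> nat \<Rightarrow> real \<Rightarrow> real \<Rightarrow> real \<Rightarrow> nat \<Rightarrow> real" where
  "piecewise3 a b p q r i = (if i < a then p else if i < b then q else r)"

lemma sum_piecewise3:
  assumes "1 \<le> a" "a \<le> b" "b \<le> n + 1"
  shows "sum (piecewise3 a b p q r) {1..<a} = (real a - 1) * p"
    and "sum (piecewise3 a b p q r) {1..<b} = (real a - 1) * p + (real b - real a) * q"
    and "sum (piecewise3 a b p q r) {1..n} =
      (real a - 1) * p + (real b - real a) * q + (real n + 1 - real b) * r"
proof -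
  let ?g = "piecewise3 a b p q r"
  have const: "sum ?g {l..<h} = (real h - real l) * c"
    if "l \<le> h" "\<forall>i\<in>{l..<h}. ?g i = c" for l h c
    using that by (simp add: of_nat_diff)
  have low: "sum ?g {1..<a} = (real a - 1) * p"
    using const[of 1 a p] assms by (simp add: piecewise3_def)
  have mid: "sum ?g {a..<b} = (real b - real a) * q"
    by (rule const) (use assms in \<open>auto simp: piecewise3_def\<close>)
  have high: "sum ?g {b..<n + 1} = (real (n + 1) - real b) * r"
    by (rule const) (use assms in \<open>auto simp: piecewise3_def\<close>)
  show "sum ?g {1..<a} = (real a - 1) * p" by (rule low)
  show below_b: "sum ?g {1..<b} = (real a - 1) * p + (real b - real a) * q"
    using sum.atLeastLessThan_concat[of 1 a b ?g] low mid assms by simp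
  have "sum ?g {1..n} = sum ?g {1..<n + 1}" by (rule sum.cong) auto
  also have "\<dots> = sum ?g {1..<b} + sum ?g {b..<n + 1}"
    by (rule sum.atLeastLessThan_concat[symmetric]) (use assms in auto)
  also have "\<dots> = (real a - 1) * p + (real b - real a) * q + (real (n + 1) - real b) * r"
    unfolding below_b high ..
  finally show "sum ?g {1..n} = (real a - 1) * p + (real b - real a) * q + (real n + 1 - real b) * r"
    by simp
qed

lemma kelmans_stable_nbhd_weight:
  assumes st: "kelmans_stable n H" and G: "is_graph_on n H"
    and m: "{a, b} \<notin> H" and ab: "1 \<le> a" "a < b" "b \<le> n"
    and w: "\<forall>i. w i \<ge> (0 :: real)" and i: "i \<in> {1..n}"
  shows "sum w (nbhd H i) \<le>
    (if i < a then sum w {1..n} - w i else if i < b then sum w {1..<b} - w i else sum w {1..<a})"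
proof -
  have le: "sum w (nbhd H i) \<le> sum w T" if "nbhd H i \<subseteq> T" "finite T" for T
    using sum_mono2[OF that(2,1), of w] w by auto
  consider "i < a" | "a \<le> i" "i < b" | "b \<le> i" by linarith
  then show ?thesis
  proof cases
    case 1
    then show ?thesis using le[OF nbhd_subset[OF G]] i by (simp add: sum_diff1)
  next
    case 2
    then show ?thesis using le[OF kelmans_stable_nbhd_mid[OF st G m ab(1,2)]] i by (simp add: sum_diff1)
  next
    case 3
    then show ?thesis using le[OF kelmans_stable_nbhd_high[OF st G m ab(1,2)]] ab by simp
  qed
qed

lemma degree_sum:
  assumes G: "is_graph_on n H"
  shows "(\<Sum>i\<in>{1..n}. real (card (nbhd H i))) = 2 * real (card H)"
proof -
  have "(\<Sum>i\<in>{1..n}. real (card (nbhd H i))) =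
      (\<Sum>i\<in>{1..n}. \<Sum>k\<in>{1..n}. if {i, k} \<in> H then 1 else 0)"
    using sum_nbhd[OF G, of _ "\<lambda>_. 1 :: real"] by simp
  also have "\<dots> = adj_form n H (\<lambda>_. 1)" unfolding adj_form_def by (simp cong: if_cong)
  also have "\<dots> = 2 * real (card H)"
    unfolding adj_form_eq_edge_prod_sum[OF G] edge_prod_sum_def by simp
  finally show ?thesis .
qed

lemma kelmans_stable_card_bound:
  assumes st: "kelmans_stable n H" and G: "is_graph_on n H"
    and m: "{a, b} \<notin> H" and ab: "1 \<le> a" "a < b" "b \<le> n"
  shows "2 * real (card H) \<le>
    (real a - 1) * (real n - 1) + (real b - real a) * (real b - 2) + (real n + 1 - real b) * (real a - 1)"
proof -
  let ?bnd = "piecewise3 a b (real n - 1) (real b - 2) (real a - 1)"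
  have "real (card (nbhd H i)) \<le> ?bnd i" if i: "i \<in> {1..n}" for i
  proof -
    have "sum (\<lambda>_. 1 :: real) (nbhd H i) \<le> (if i < a then sum (\<lambda>_. 1) {1..n} - 1
        else if i < b then sum (\<lambda>_. 1) {1..<b} - 1 else sum (\<lambda>_. 1) {1..<a})"
      by (rule kelmans_stable_nbhd_weight[OF st G m ab _ i]) simp
    then show ?thesis using ab by (simp add: piecewise3_def of_nat_diff split: if_splits)
  qed
  then have "(\<Sum>i\<in>{1..n}. real (card (nbhd H i))) \<le> sum ?bnd {1..n}" by (rule sum_mono)
  then show ?thesis using degree_sum[OF G] sum_piecewise3(3)[of a b n] ab by simp
qed

text \<open>A positive vector w with \<open>A w \<le> c w\<close> bounds the quadratic form, since
  \<open>2 u\<^sub>i u\<^sub>j \<le> (w\<^sub>j / w\<^sub>i) u\<^sub>i\<^sup>2 + (w\<^sub>i / w\<^sub>j) u\<^sub>j\<^sup>2\<close>.\<close>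
lemma adj_form_le_of_weight:
  assumes w: "\<forall>i\<in>{1..n}. w i > 0"
    and bound: "\<forall>i\<in>{1..n}. (\<Sum>k\<in>{1..n}. if {i, k} \<in> H then w k else 0) \<le> c * w i"
  shows "adj_form n H u \<le> c * sum_sq n u"
proof -
  define a where "a i j = (if {i, j} \<in> H then (1::real) else 0)" for i j
  have a_sym: "a i j = a j i" for i j unfolding a_def by (simp add: insert_commute)
  define T where "T = (\<Sum>i\<in>{1..n}. \<Sum>j\<in>{1..n}. a i j * ((w j / w i) * (u i)\<^sup>2))"
  define T' where "T' = (\<Sum>i\<in>{1..n}. \<Sum>j\<in>{1..n}. a i j * ((w i / w j) * (u j)\<^sup>2))"
  have amgm: "u i * u j \<le> ((w j / w i) * (u i)\<^sup>2 + (w i / w j) * (u j)\<^sup>2) / 2"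
    if "i \<in> {1..n}" "j \<in> {1..n}" for i j
  proof -
    have pos: "w i > 0" "w j > 0" using w that by auto
    then have "((w j / w i) * (u i)\<^sup>2 + (w i / w j) * (u j)\<^sup>2) / 2 - u i * u j =
        (w j * u i - w i * u j)\<^sup>2 / (2 * w i * w j)"
      by (simp add: field_simps power2_eq_square)
    moreover have "0 \<le> (w j * u i - w i * u j)\<^sup>2 / (2 * w i * w j)"
      using pos by simp
    ultimately show ?thesis by linarith
  qed
  have "T' = (\<Sum>j\<in>{1..n}. \<Sum>i\<in>{1..n}. a i j * ((w i / w j) * (u j)\<^sup>2))"
    unfolding T'_def by (rule sum.swap)
  also have "\<dots> = T" unfolding T_def using a_sym by simp
  finally have "T' = T" .
  have "adj_form n H u = (\<Sum>i\<in>{1..n}. \<Sum>j\<in>{1..n}. a i j * (u i * u j))"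
    unfolding adj_form_def a_def by (intro sum.cong refl) auto
  also have "\<dots> \<le> (\<Sum>i\<in>{1..n}. \<Sum>j\<in>{1..n}.
      a i j * (((w j / w i) * (u i)\<^sup>2 + (w i / w j) * (u j)\<^sup>2) / 2))"
    by (intro sum_mono mult_left_mono amgm) (auto simp: a_def)
  also have "\<dots> = (\<Sum>i\<in>{1..n}. \<Sum>j\<in>{1..n}.
      (a i j * ((w j / w i) * (u i)\<^sup>2) + a i j * ((w i / w j) * (u j)\<^sup>2)) / 2)"
    by (intro sum.cong refl) (simp add: add_divide_distrib distrib_left)
  also have "\<dots> = (T + T') / 2"
    unfolding T_def T'_def by (simp only: sum_divide_distrib[symmetric] sum.distrib)
  also have "\<dots> = T" using \<open>T' = T\<close> by simp
  also have "\<dots> = (\<Sum>i\<in>{1..n}. ((u i)\<^sup>2 / w i) * (\<Sum>k\<in>{1..n}. if {i, k} \<in> H then w k else 0))"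
    unfolding T_def a_def by (simp add: sum_distrib_left, intro sum.cong refl) auto
  also have "\<dots> \<le> (\<Sum>i\<in>{1..n}. ((u i)\<^sup>2 / w i) * (c * w i))"
    using bound w by (intro sum_mono mult_left_mono) (auto intro!: divide_nonneg_pos)
  also have "\<dots> = c * sum_sq n u"
    unfolding sum_sq_def sum_distrib_left using w by (intro sum.cong refl) force+
  finally show ?thesis .
qed

lemma kelmans_stable_adj_form_bound:
  assumes st: "kelmans_stable n H" and G: "is_graph_on n H"
    and m: "{a, b} \<notin> H" and ab: "1 \<le> a" "a < b" "b \<le> n"
    and pqr: "p > 0" "q > 0" "r > 0"
    and low: "2 \<le> a \<Longrightarrow>
      (real a - 1) * p + (real b - real a) * q + (real n + 1 - real b) * r - p \<le> (real n - 2) * p"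
    and mid: "(real a - 1) * p + (real b - real a) * q - q \<le> (real n - 2) * q"
    and high: "(real a - 1) * p \<le> (real n - 2) * r"
  shows "adj_form n H u \<le> (real n - 2) * sum_sq n u"
proof (rule adj_form_le_of_weight)
  let ?w = "piecewise3 a b p q r"
  show "\<forall>i\<in>{1..n}. ?w i > 0" using pqr by (simp add: piecewise3_def)
  show "\<forall>i\<in>{1..n}. (\<Sum>k\<in>{1..n}. if {i, k} \<in> H then ?w k else 0) \<le> (real n - 2) * ?w i"
  proof
    fix i assume i: "i \<in> {1..n}"
    have "\<forall>i. ?w i \<ge> 0" using pqr by (simp add: piecewise3_def)
    note nb = kelmans_stable_nbhd_weight[OF st G m ab this i]
    note S = sum_piecewise3[of a b n p q r]
    consider "i < a" | "a \<le> i" "i < b" | "b \<le> i" by linarith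
    then have "sum ?w (nbhd H i) \<le> (real n - 2) * ?w i"
    proof cases
      case 1
      then have "sum ?w (nbhd H i) \<le> sum ?w {1..n} - p" "?w i = p"
        using nb by (simp_all add: piecewise3_def)
      moreover have "2 \<le> a" using 1 i by simp
      ultimately show ?thesis using S(3) low ab by simp
    next
      case 2
      then have "sum ?w (nbhd H i) \<le> sum ?w {1..<b} - q" "?w i = q"
        using nb by (simp_all add: piecewise3_def)
      then show ?thesis using S(2) mid ab by simp
    next
      case 3
      then have "sum ?w (nbhd H i) \<le> sum ?w {1..<a}" "?w i = r"
        using nb ab by (simp_all add: piecewise3_def)
      then show ?thesis using S(1) high ab by simp
    qed
    then show "(\<Sum>k\<in>{1..n}. if {i, k} \<in> H then ?w k else 0) \<le> (real n - 2) * ?w i"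
      using sum_nbhd[OF G, of i ?w] by simp
  qed
qed

lemma two_mul_choose_two: "2 * (m choose 2) = m * (m - 1)"
proof (cases m)
  case (Suc k)
  have "even (Suc k * k)" by simp
  then show ?thesis unfolding choose_two Suc by simp
qed simp

lemma kelmans_closure_has_edge:
  assumes G: "is_graph_on n E" and rt: "(kelmans_step n)\<^sup>*\<^sup>* E H" and st: "kelmans_stable n H"
    and hyp: "card E > (n - 1 choose 2) + 1 \<or>
      (\<exists>u. (\<forall>i. u i \<ge> 0) \<and> adj_form n E u > (real n - 2) * sum_sq n u)"
    and ab: "1 \<le> a" "a < b" "b \<le> n"
    and count: "(real a - 1) * (real n - 1) + (real b - real a) * (real b - 2)
      + (real n + 1 - real b) * (real a - 1) \<le> (real n - 1) * (real n - 2) + 2"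
    and pqr: "p > 0" "q > 0" "r > 0"
    and low: "2 \<le> a \<Longrightarrow>
      (real a - 1) * p + (real b - real a) * q + (real n + 1 - real b) * r - p \<le> (real n - 2) * p"
    and mid: "(real a - 1) * p + (real b - real a) * q - q \<le> (real n - 2) * q"
    and high: "(real a - 1) * p \<le> (real n - 2) * r"
  shows "{a, b} \<in> H"
proof (rule ccontr)
  assume m: "{a, b} \<notin> H"
  have GH: "is_graph_on n H" by (rule kelmans_steps_graph[OF rt G])
  from hyp show False
  proof
    assume many: "card E > (n - 1 choose 2) + 1"
    have "real (2 * (n - 1 choose 2)) = real ((n - 1) * (n - 1 - 1))"
      by (simp only: two_mul_choose_two)
    then have "2 * real (n - 1 choose 2) = (real n - 1) * (real n - 2)"
      using ab by (simp add: of_nat_diff)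
    then show False
      using many kelmans_stable_card_bound[OF st GH m ab] count kelmans_steps_card[OF rt G]
      by (simp add: of_nat_less_iff[symmetric, where 'a = real])
  next
    assume "\<exists>u. (\<forall>i. u i \<ge> 0) \<and> adj_form n E u > (real n - 2) * sum_sq n u"
    then obtain u where u: "\<forall>i. u i \<ge> 0" "adj_form n E u > (real n - 2) * sum_sq n u" by blast
    then obtain u' where "sum_sq n u' = sum_sq n u" "adj_form n E u \<le> adj_form n H u'"
      using kelmans_steps_adj_form[OF rt G] by blast
    then show False
      using u kelmans_stable_adj_form_bound[OF st GH m ab pqr low mid high, of u'] by simp
  qed
qed

lemma kelmans_closure_has_edge_sum_n_plus_2:
  assumes G: "is_graph_on n E" and rt: "(kelmans_step n)\<^sup>*\<^sup>* E H" and st: "kelmans_stable n H"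
    and hyp: "card E > (n - 1 choose 2) + 1 \<or>
      (\<exists>u. (\<forall>i. u i \<ge> 0) \<and> adj_form n E u > (real n - 2) * sum_sq n u)"
    and j: "3 \<le> j" "2 * j \<le> n + 1"
  shows "{j, n + 2 - j} \<in> H"
proof -
  have ab: "1 \<le> j" "j < n + 2 - j" "n + 2 - j \<le> n" and b: "real (n + 2 - j) = real n + 2 - real j"
    using j by (auto simp: of_nat_diff)
  have "0 \<le> (real j - 2) * (2 * real n - 3 * real j - 1)"
    using j by (intro mult_nonneg_nonneg) auto
  then have count: "(real j - 1) * (real n - 1) + (real (n + 2 - j) - real j) * (real (n + 2 - j) - 2)
      + (real n + 1 - real (n + 2 - j)) * (real j - 1) \<le> (real n - 1) * (real n - 2) + 2"
    unfolding b by (simp add: algebra_simps)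
  show ?thesis
  proof (cases "2 * j \<le> n")
    case True
    show ?thesis
      by (rule kelmans_closure_has_edge[OF G rt st hyp ab count, of 2 2 1]) (use True j b in auto)
  next
    case False
    txt \<open>Here \<open>n = 2j - 1\<close>, and the weights 2, 2, 1 violate the condition on [b, n].\<close>
    then have n: "real n = 2 * real j - 1" using j by simp
    have "0 \<le> (real j - 1) * (real j - 3)" using j by (intro mult_nonneg_nonneg) auto
    then show ?thesis
      using kelmans_closure_has_edge[OF G rt st hyp ab count, of "2 * real j - 3" "real j - 1" "real j - 1"]
        j unfolding b n by (simp add: algebra_simps)
  qed
qed

lemma kelmans_closure_has_edge_sum_n_plus_1:
  assumes G: "is_graph_on n E" and rt: "(kelmans_step n)\<^sup>*\<^sup>* E H" and st: "kelmans_stable n H"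
    and hyp: "card E > (n - 1 choose 2) + 1 \<or>
      (\<exists>u. (\<forall>i. u i \<ge> 0) \<and> adj_form n E u > (real n - 2) * sum_sq n u)"
    and k: "1 \<le> k" "2 * k \<le> n"
  shows "{k, n + 1 - k} \<in> H"
proof -
  have ab: "1 \<le> k" "k < n + 1 - k" "n + 1 - k \<le> n" and b: "real (n + 1 - k) = real n + 1 - real k"
    using k by (auto simp: of_nat_diff)
  have "0 \<le> (real n - 2 * real k) * (real k - 1)" "0 \<le> (2 * real k - 3)\<^sup>2"
    using k by (auto intro: mult_nonneg_nonneg)
  then have count: "(real k - 1) * (real n - 1) + (real (n + 1 - k) - real k) * (real (n + 1 - k) - 2)
      + (real n + 1 - real (n + 1 - k)) * (real k - 1) \<le> (real n - 1) * (real n - 2) + 2"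
    unfolding b by (simp add: algebra_simps power2_eq_square)
  show ?thesis
    by (rule kelmans_closure_has_edge[OF G rt st hyp ab count, of 2 2 1]) (use k b in auto)
qed

section \<open>Spectral radius\<close>

lemma adj_form_abs_eigenvector:
  assumes v: "v \<in> carrier_vec n" "v \<noteq> 0\<^sub>v n" "adj_mat n E *\<^sub>v v = lam \<cdot>\<^sub>v v"
  defines "u \<equiv> \<lambda>m. cmod (v $ (m - 1))"
  shows "norm lam * sum_sq n u \<le> adj_form n E u" and "sum_sq n u > 0"
proof -
  define a where "a i j = (if {Suc i, Suc j} \<in> E then (1::real) else 0)" for i j
  have eigen_bound: "norm lam * u (Suc i) \<le> (\<Sum>j<n. a i j * u (Suc j))" if i: "i < n" for i
  proof -
    have "lam * v $ i = (adj_mat n E *\<^sub>v v) $ i" using v(1,3) i by simp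
    also have "\<dots> = (\<Sum>j<n. of_real (a i j) * v $ j)"
      using v(1) i unfolding adj_mat_def a_def by (auto simp: scalar_prod_def intro: sum.cong)
    finally have eigen: "lam * v $ i = (\<Sum>j<n. of_real (a i j) * v $ j)" .
    have "norm lam * u (Suc i) = norm (lam * v $ i)" unfolding u_def by (simp add: norm_mult)
    also have "\<dots> = norm (\<Sum>j<n. of_real (a i j) * v $ j)" unfolding eigen ..
    also have "\<dots> \<le> (\<Sum>j<n. a i j * u (Suc j))"
      using norm_sum by (fastforce simp: u_def a_def norm_mult intro: order.trans)
    finally show ?thesis .
  qed
  have "norm lam * (\<Sum>i<n. (u (Suc i))\<^sup>2) = (\<Sum>i<n. u (Suc i) * (norm lam * u (Suc i)))"
    by (simp add: sum_distrib_left power2_eq_square algebra_simps)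
  also have "\<dots> \<le> (\<Sum>i<n. u (Suc i) * (\<Sum>j<n. a i j * u (Suc j)))"
    by (intro sum_mono mult_left_mono eigen_bound) (auto simp: u_def)
  also have "\<dots> = adj_form n E u"
    unfolding adj_form_def a_def sum_distrib_left
    by (simp add: sum.atLeast1_atMost_eq) (intro sum.cong refl, simp)
  finally show "norm lam * sum_sq n u \<le> adj_form n E u"
    unfolding sum_sq_def by (simp add: sum.atLeast1_atMost_eq)
  obtain i where i: "i < n" "v $ i \<noteq> 0"
    using v(1,2) by (metis carrier_vecD eq_vecI index_zero_vec(1,2))
  then have "(u (Suc i))\<^sup>2 > 0" unfolding u_def by simp
  then show "sum_sq n u > 0"
    unfolding sum_sq_def using i by (intro sum_pos2[of _ "Suc i"]) auto
qed

lemma adj_form_gt_of_rho_gt: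
  assumes n: "n > 0" and rho: "rho n E > c"
  shows "\<exists>u. (\<forall>i. u i \<ge> 0) \<and> adj_form n E u > c * sum_sq n u"
proof -
  have A: "adj_mat n E \<in> carrier_mat n n" unfolding adj_mat_def by simp
  from spectral_radius_mem_max(1)[OF A n] obtain lam
    where "eigenvalue (adj_mat n E) lam" and lam: "norm lam = rho n E"
    unfolding rho_def spectrum_def by auto
  then obtain v where v: "v \<in> carrier_vec n" "v \<noteq> 0\<^sub>v n" "adj_mat n E *\<^sub>v v = lam \<cdot>\<^sub>v v"
    unfolding eigenvalue_def eigenvector_def using A by auto
  let ?u = "\<lambda>m. cmod (v $ (m - 1))"
  have "c * sum_sq n ?u < norm lam * sum_sq n ?u"
    using rho lam adj_form_abs_eigenvector(2)[OF v] by simp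
  then have "adj_form n E ?u > c * sum_sq n ?u"
    using adj_form_abs_eigenvector(1)[OF v] by linarith
  then show ?thesis by (intro exI[of _ ?u]) simp
qed

theorem mainTheorem7:
  fixes n :: nat and E H :: "nat set set"
  assumes "n \<ge> 4"
    and "is_graph_on n E"
    and "card E > (n - 1 choose 2) + 1 \<or> rho n E > real n - 2"
    and "(kelmans_step n)\<^sup>*\<^sup>* E H"
    and "kelmans_stable n H"
  shows "(\<forall>j \<in> {3..(n + 1) div 2}. {j, n + 2 - j} \<in> H) \<and>
         (\<forall>k \<in> {1..n div 2}. {k, n + 1 - k} \<in> H)"
proof -
  have hyp: "card E > (n - 1 choose 2) + 1 \<or>
      (\<exists>u. (\<forall>i. u i \<ge> 0) \<and> adj_form n E u > (real n - 2) * sum_sq n u)"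
    using assms(1,3) adj_form_gt_of_rho_gt[where c = "real n - 2"] by auto
  show ?thesis
    using kelmans_closure_has_edge_sum_n_plus_2[OF assms(2,4,5) hyp]
      kelmans_closure_has_edge_sum_n_plus_1[OF assms(2,4,5) hyp] by auto
qed

end
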